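(* Let $\mathcal X$ be a finite set, let $Q\in\mathbb R^{\mathcal X\times\mathcal X}$ be an irreducible generator matrix (off-diagonal entries nonnegative, rows summing to zero) with invariant probability vector $\pi$ having all entries strictly positive ($Q^{\mathsf T}\pi=0$, $\sum_x\pi_x=1$), and define $A\in\mathbb R^{\mathcal X\times\mathcal X}$ by $A_{xy}:=Q_{yx}\sqrt{\pi_y/\pi_x}-Q_{xy}\sqrt{\pi_x/\pi_y}$. Define $\tilde{\mathcal E}:\mathbb R^{\mathcal X}\to\mathbb R$ and $\tilde{\mathbb J}:\mathbb R^{\mathcal X}\to\mathbb R^{\mathcal X\times\mathcal X}$ by $$\tilde{\mathcal E}(\omega):=1-\sqrt\pi\cdot\omega,\qquad \tilde{\mathbb J}(\omega):=\tfrac12\big(\sqrt\pi\otimes(A\omega)-(A\omega)\otimes\sqrt\pi\big).$$ Then the ODE $\dot\omega=\frac12A\omega$ admits the Hamiltonian structure $(\mathbb R^{\mathcal X},\tilde{\mathcal E},\tilde{\mathbb J})$: $\tilde{\mathbb J}(\omega)$ is skew-symmetric for every $\omega$, the bracket $\{\mathcal G_1,\mathcal G_2\}(\omega):=\langle D\mathcal G_1(\omega),\tilde{\mathbb J}(\omega)D\mathcal G_2(\omega)\rangle$ satisfies the Jacobi identity, and $\frac12A\omega=\tilde{\mathbb J}(\omega)D\tilde{\mathcal E}(\omega)$ for all $\omega\in\mathbb R^{\mathcal X}$.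
   Context: $\sqrt\pi$ denotes the entrywise square root, $v\cdot w$ and $\langle v,w\rangle$ the Euclidean inner product, $D$ the gradient, and $a\otimes b$ the outer product, i.e. the matrix with $(a\otimes b)v=\langle b,v\rangle a$. The ODE $\dot\omega=\frac12A\omega$ arises from $\dot\rho_x=\sum_{y\ne x}A_{xy}\sqrt{\rho_x\rho_y}$ via $\omega_x=\sqrt{\rho_x}$. *)

theory Defs
  imports "HOL-Analysis.Analysis"
begin

text \<open>Vectors in R^X are modelled as real^'x with 'x a finite type; matrices as real^'x^'x,
  with entry (x,y) written M$x$y.\<close>

definition generator :: "real^'x^'x \<Rightarrow> bool" where
  "generator Q \<longleftrightarrow> (\<forall>x y. x \<noteq> y \<longrightarrow> Q$x$y \<ge> 0) \<and> (\<forall>x. (\<Sum>y\<in>UNIV. Q$x$y) = 0)"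

definition irreducible_gen :: "real^'x^'x \<Rightarrow> bool" where
  "irreducible_gen Q \<longleftrightarrow> (\<forall>x y. x \<noteq> y \<longrightarrow> (x, y) \<in> {(u, v). u \<noteq> v \<and> Q$u$v > 0}\<^sup>+)"

definition sqrtv :: "real^'x \<Rightarrow> real^'x" where
  "sqrtv p = (\<chi> x. sqrt (p$x))"

definition outer :: "real^'x \<Rightarrow> real^'x \<Rightarrow> real^'x^'x" where
  "outer a b = (\<chi> i j. a$i * b$j)"

definition Amat :: "real^'x^'x \<Rightarrow> real^'x \<Rightarrow> real^'x^'x" where
  "Amat Q p = (\<chi> x y. Q$y$x * sqrt (p$y / p$x) - Q$x$y * sqrt (p$x / p$y))"

definition Etil :: "real^'x \<Rightarrow> real^'x \<Rightarrow> real" where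
  "Etil p w = 1 - sqrtv p \<bullet> w"

definition Jtil :: "real^'x^'x \<Rightarrow> real^'x \<Rightarrow> real^'x \<Rightarrow> real^'x^'x" where
  "Jtil Q p w = (1/2) *\<^sub>R (outer (sqrtv p) (Amat Q p *v w) - outer (Amat Q p *v w) (sqrtv p))"

definition grad :: "(real^'x \<Rightarrow> real) \<Rightarrow> real^'x \<Rightarrow> real^'x" where
  "grad G w = (\<chi> i. frechet_derivative G (at w) (axis i 1))"

definition bracket :: "(real^'x \<Rightarrow> real^'x^'x) \<Rightarrow> (real^'x \<Rightarrow> real) \<Rightarrow> (real^'x \<Rightarrow> real) \<Rightarrow> real^'x \<Rightarrow> real" where
  "bracket J G1 G2 w = grad G1 w \<bullet> (J w *v grad G2 w)"

end

theory Submission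
  imports Defs
begin

text \<open>
  Write s = \<surd>\<pi> and M = A, so that Jtil(w) = (s \<otimes> Mw - Mw \<otimes> s) / 2. For such a structure
  the bracket is {F, G} = (XF \<cdot> YG - YF \<cdot> XG) / 2 with the first-order operators X = s \<cdot> \<nabla> and
  Y = Mw \<cdot> \<nabla>. In the cyclic sum of {F, {G, H}} all terms cancel except those involving the
  commutator [X, Y] F = Ms \<cdot> \<nabla>F + Mw \<cdot> (D\<twosuperior>F s) - s \<cdot> (D\<twosuperior>F Mw), and this vanishes because
  A\<surd>\<pi> = 0 (zero row sums of Q and stationarity of \<pi>) and second derivatives are symmetric.
  Symmetry is needed when \<nabla>F is merely differentiable at the point; it follows from the limit
  of the second difference quotient, computed with the mean value theorem.
  For the energy, D Etil = -s, s \<cdot> Mw = 0 by skew-symmetry of A, and s \<cdot> s = 1, so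
  Jtil(w) (-s) = Aw / 2.
\<close>

lemma grad_inner_eq_derivative:
  fixes G :: "real^'n \<Rightarrow> real"
  assumes "(G has_derivative G') (at w)"
  shows "grad G w \<bullet> h = G' h"
proof -
  have "linear G'"
    using assms by (rule has_derivative_linear)
  have "G' h = G' (\<Sum>i\<in>UNIV. h $ i *\<^sub>R axis i 1)"
    by (simp add: basis_expansion[of h, unfolded scalar_mult_eq_scaleR])
  also have "\<dots> = (\<Sum>i\<in>UNIV. h $ i * G' (axis i 1))"
    by (simp add: linear_sum[OF \<open>linear G'\<close>] linear_scale[OF \<open>linear G'\<close>] o_def)
  also have "\<dots> = grad G w \<bullet> h"
    by (simp add: grad_def inner_vec_def mult.commute frechet_derivative_at[OF assms, symmetric])
  finally show ?thesis ..
qed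

lemma has_derivative_grad:
  fixes G :: "real^'n \<Rightarrow> real"
  assumes "G differentiable (at w)"
  shows "(G has_derivative (\<lambda>h. grad G w \<bullet> h)) (at w)"
  using frechet_derivative_works[THEN iffD1, OF assms]
  by (simp add: grad_inner_eq_derivative)

definition second_difference ::
    "('a::real_vector \<Rightarrow> real) \<Rightarrow> 'a \<Rightarrow> 'a \<Rightarrow> 'a \<Rightarrow> real \<Rightarrow> real" where
  "second_difference f x u v t = f (x + t *\<^sub>R u + t *\<^sub>R v) - f (x + t *\<^sub>R u) - f (x + t *\<^sub>R v) + f x"

lemma second_difference_commute: "second_difference f x u v = second_difference f x v u"
  by (simp add: fun_eq_iff second_difference_def algebra_simps)

lemma second_difference_mean_value:
  fixes f :: "'a::real_inner \<Rightarrow> real"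
  assumes df: "\<And>y. (f has_derivative (\<lambda>h. g y \<bullet> h)) (at y)" and "0 < t"
  obtains z where "0 < z" "z < t"
    "second_difference f x u v t = t * ((g (x + z *\<^sub>R u + t *\<^sub>R v) - g (x + z *\<^sub>R u)) \<bullet> u)"
proof -
  define \<phi> where "\<phi> r = f (x + r *\<^sub>R u + t *\<^sub>R v) - f (x + r *\<^sub>R u)" for r
  have "(\<phi> has_derivative (\<lambda>h. (g (x + r *\<^sub>R u + t *\<^sub>R v) - g (x + r *\<^sub>R u)) \<bullet> (h *\<^sub>R u)))
          (at r within {0..t})" for r
    unfolding \<phi>_def inner_diff_left
    by (rule derivative_eq_intros has_derivative_compose[OF _ df] | simp)+
  from mvt_simple[OF \<open>0 < t\<close> this] obtain z where "z \<in> {0<..<t}"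
    "\<phi> t - \<phi> 0 = (g (x + z *\<^sub>R u + t *\<^sub>R v) - g (x + z *\<^sub>R u)) \<bullet> (t *\<^sub>R u)"
    by auto
  moreover have "\<phi> t - \<phi> 0 = second_difference f x u v t"
    by (simp add: \<phi>_def second_difference_def)
  ultimately show ?thesis
    by (intro that[of z]) simp_all
qed

lemma second_difference_bound:
  fixes f :: "'a::real_inner \<Rightarrow> real"
  assumes df: "\<And>y. (f has_derivative (\<lambda>h. g y \<bullet> h)) (at y)" and "linear H" and "0 < t"
    and remainder: "\<And>k. norm k \<le> t * (norm u + norm v) \<Longrightarrow> norm (g (x + k) - g x - H k) \<le> \<eta>"
  shows "\<bar>second_difference f x u v t - t\<^sup>2 * (H v \<bullet> u)\<bar>
           \<le> 2 * t * \<eta> * norm u"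
proof -
  obtain z where z: "0 < z" "z < t" and mean_value:
    "second_difference f x u v t = t * ((g (x + z *\<^sub>R u + t *\<^sub>R v) - g (x + z *\<^sub>R u)) \<bullet> u)"
    using second_difference_mean_value[OF df \<open>0 < t\<close>] .
  define k1 k2 where "k1 = z *\<^sub>R u + t *\<^sub>R v" and "k2 = z *\<^sub>R u"
  have "norm k1 \<le> z * norm u + t * norm v" "norm k2 = z * norm u"
    unfolding k1_def k2_def using z by (auto intro: order_trans[OF norm_triangle_ineq])
  moreover have "z * norm u \<le> t * norm u"
    using z by (simp add: mult_right_mono)
  ultimately have "norm k1 \<le> t * (norm u + norm v)" "norm k2 \<le> t * (norm u + norm v)"
    using \<open>0 < t\<close> by (simp_all add: distrib_left add_increasing2)
  then have "norm ((g (x + k1) - g x - H k1) - (g (x + k2) - g x - H k2)) \<le> 2 * \<eta>"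
    using remainder by (smt (verit) norm_triangle_ineq4)
  moreover have "H k1 - H k2 = t *\<^sub>R H v"
    unfolding k1_def k2_def using \<open>linear H\<close> by (simp add: linear_add linear_scale)
  ultimately have "norm (g (x + z *\<^sub>R u + t *\<^sub>R v) - g (x + z *\<^sub>R u) - t *\<^sub>R H v) \<le> 2 * \<eta>"
    unfolding k1_def k2_def by (simp add: algebra_simps)
  then have "\<bar>(g (x + z *\<^sub>R u + t *\<^sub>R v) - g (x + z *\<^sub>R u) - t *\<^sub>R H v) \<bullet> u\<bar> \<le> 2 * \<eta> * norm u"
    by (meson Cauchy_Schwarz_ineq2 mult_right_mono norm_ge_zero order_trans)
  moreover have "second_difference f x u v t - t\<^sup>2 * (H v \<bullet> u)
      = t * ((g (x + z *\<^sub>R u + t *\<^sub>R v) - g (x + z *\<^sub>R u) - t *\<^sub>R H v) \<bullet> u)"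
    unfolding mean_value by (simp add: inner_diff_left power2_eq_square algebra_simps)
  ultimately show ?thesis
    using \<open>0 < t\<close> by (simp add: abs_mult mult_left_mono flip: mult.assoc)
qed

lemma second_difference_quotient_tendsto:
  fixes f :: "'a::real_inner \<Rightarrow> real"
  assumes df: "\<And>y. (f has_derivative (\<lambda>h. g y \<bullet> h)) (at y)" and dg: "(g has_derivative H) (at x)"
  shows "((\<lambda>t. second_difference f x u v t / t\<^sup>2) \<longlongrightarrow> H v \<bullet> u) (at_right 0)"
proof (rule tendstoI)
  fix \<epsilon> :: real
  assume "0 < \<epsilon>"
  define c where "c = norm u + norm v + 1"
  have "0 < c"
    unfolding c_def by (simp add: add_nonneg_pos)
  define \<epsilon>' where "\<epsilon>' = \<epsilon> / (4 * c\<^sup>2)"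
  have "0 < \<epsilon>'"
    unfolding \<epsilon>'_def using \<open>0 < \<epsilon>\<close> \<open>0 < c\<close> by simp
  with dg obtain \<delta> where "0 < \<delta>"
    and \<delta>: "\<And>y. norm (y - x) < \<delta> \<Longrightarrow> norm (g y - g x - H (y - x)) \<le> \<epsilon>' * norm (y - x)"
    unfolding has_derivative_at_alt by blast
  have "\<bar>second_difference f x u v t / t\<^sup>2 - H v \<bullet> u\<bar> < \<epsilon>"
    if "0 < t" "t < \<delta> / c" for t
  proof -
    have "norm (g (x + k) - g x - H k) \<le> \<epsilon>' * (t * c)" if "norm k \<le> t * (norm u + norm v)" for k
    proof -
      have "norm k \<le> t * c"
        using that \<open>0 < t\<close> unfolding c_def by (smt (verit) mult_left_mono)
      moreover have "t * c < \<delta>"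
        using \<open>t < \<delta> / c\<close> \<open>0 < c\<close> by (simp add: field_simps)
      ultimately show ?thesis
        using \<delta>[of "x + k"] \<open>0 < \<epsilon>'\<close> by (smt (verit) add_diff_cancel_left' mult_left_mono)
    qed
    from second_difference_bound[OF df has_derivative_linear[OF dg] \<open>0 < t\<close> this]
    have "\<bar>second_difference f x u v t - t\<^sup>2 * (H v \<bullet> u)\<bar>
            \<le> 2 * t * (\<epsilon>' * (t * c)) * norm u" .
    also have "\<dots> = t\<^sup>2 * \<epsilon> * (norm u / c) / 2"
      using \<open>0 < c\<close> unfolding \<epsilon>'_def by (simp add: power2_eq_square field_simps)
    also have "\<dots> \<le> t\<^sup>2 * \<epsilon> / 2"
      using \<open>0 < c\<close> \<open>0 < \<epsilon>\<close> unfolding c_def by (intro divide_right_mono mult_left_le) simp_all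
    also have "\<dots> < t\<^sup>2 * \<epsilon>"
      using \<open>0 < t\<close> \<open>0 < \<epsilon>\<close> by simp
    finally have "\<bar>(second_difference f x u v t - t\<^sup>2 * (H v \<bullet> u)) / t\<^sup>2\<bar> < \<epsilon>"
      using \<open>0 < t\<close> by (simp add: abs_divide pos_divide_less_eq mult.commute)
    then show ?thesis
      using \<open>0 < t\<close> by (simp add: diff_divide_distrib)
  qed
  then show "eventually (\<lambda>t. dist (second_difference f x u v t / t\<^sup>2) (H v \<bullet> u) < \<epsilon>)
      (at_right 0)"
    unfolding eventually_at_right_field dist_real_def using \<open>0 < \<delta>\<close> \<open>0 < c\<close>
    by (intro exI[of _ "\<delta> / c"]) auto
qed

lemma second_derivative_symmetric:
  fixes f :: "'a::real_inner \<Rightarrow> real"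
  assumes "\<And>y. (f has_derivative (\<lambda>h. g y \<bullet> h)) (at y)" and "(g has_derivative H) (at x)"
  shows "H v \<bullet> u = H u \<bullet> v"
proof (rule tendsto_unique[OF trivial_limit_at_right_real])
  show "((\<lambda>t. second_difference f x u v t / t\<^sup>2) \<longlongrightarrow> H v \<bullet> u) (at_right 0)"
    using assms by (rule second_difference_quotient_tendsto)
  show "((\<lambda>t. second_difference f x u v t / t\<^sup>2) \<longlongrightarrow> H u \<bullet> v) (at_right 0)"
    using second_difference_quotient_tendsto[OF assms, of v u] by (simp add: second_difference_commute)
qed

lemma grad_derivative_symmetric:
  fixes G :: "real^'n \<Rightarrow> real"
  assumes "\<And>y. G differentiable (at y)" and "(grad G has_derivative H) (at w)"
  shows "u \<bullet> H v = v \<bullet> H u"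
  using second_derivative_symmetric[OF has_derivative_grad[OF assms(1)] assms(2)]
  by (simp add: inner_commute)

definition wedge_structure :: "real^'n \<Rightarrow> real^'n^'n \<Rightarrow> real^'n \<Rightarrow> real^'n^'n" where
  "wedge_structure s M w = (1/2) *\<^sub>R (outer s (M *v w) - outer (M *v w) s)"

lemma outer_mult_vec: "outer a b *v v = (b \<bullet> v) *\<^sub>R a"
  by (simp add: vec_eq_iff matrix_vector_mult_def outer_def inner_vec_def sum_distrib_left
      algebra_simps)

lemma wedge_structure_mult_vec:
  "wedge_structure s M w *v v = (1/2) *\<^sub>R (((M *v w) \<bullet> v) *\<^sub>R s - (s \<bullet> v) *\<^sub>R (M *v w))"
  by (simp add: wedge_structure_def scaleR_matrix_vector_assoc[symmetric]
      matrix_vector_mult_diff_rdistrib outer_mult_vec)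

lemma transpose_wedge_structure: "transpose (wedge_structure s M w) = - wedge_structure s M w"
  by (simp add: wedge_structure_def outer_def transpose_def vec_eq_iff field_simps)

lemma bracket_wedge_structure:
  "bracket (wedge_structure s M) F G w
     = (1/2) * ((s \<bullet> grad F w) * ((M *v w) \<bullet> grad G w) - ((M *v w) \<bullet> grad F w) * (s \<bullet> grad G w))"
  by (simp add: bracket_def wedge_structure_mult_vec inner_diff_right inner_commute[of "grad F w"])

lemma inner_grad_bracket_wedge_structure:
  fixes F G :: "real^'n \<Rightarrow> real"
  assumes HF: "(grad F has_derivative HF) (at w)" and HG: "(grad G has_derivative HG) (at w)"
  shows "v \<bullet> grad (bracket (wedge_structure s M) F G) w
     = (1/2) * ((s \<bullet> HF v) * ((M *v w) \<bullet> grad G w)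
        + (s \<bullet> grad F w) * ((M *v v) \<bullet> grad G w + (M *v w) \<bullet> HG v)
        - ((M *v v) \<bullet> grad F w + (M *v w) \<bullet> HF v) * (s \<bullet> grad G w)
        - ((M *v w) \<bullet> grad F w) * (s \<bullet> HG v))"
proof -
  let ?P = "\<lambda>w. (s \<bullet> grad F w) * ((M *v w) \<bullet> grad G w) - ((M *v w) \<bullet> grad F w) * (s \<bullet> grad G w)"
  let ?P' = "\<lambda>v. (s \<bullet> HF v) * ((M *v w) \<bullet> grad G w)
        + (s \<bullet> grad F w) * ((M *v v) \<bullet> grad G w + (M *v w) \<bullet> HG v)
        - ((M *v v) \<bullet> grad F w + (M *v w) \<bullet> HF v) * (s \<bullet> grad G w)
        - ((M *v w) \<bullet> grad F w) * (s \<bullet> HG v)"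
  have "(?P has_derivative ?P') (at w)"
    by ((rule derivative_eq_intros allI refl HF HG
          matrix_vector_mul_bounded_linear[THEN bounded_linear_imp_has_derivative])+,
        simp add: fun_eq_iff algebra_simps)
  then have "((\<lambda>w. (1/2) * ?P w) has_derivative (\<lambda>v. (1/2) * ?P' v)) (at w)"
    by (rule has_derivative_mult_right)
  moreover have "bracket (wedge_structure s M) F G = (\<lambda>w. (1/2) * ?P w)"
    by (simp add: fun_eq_iff bracket_wedge_structure)
  ultimately have "(bracket (wedge_structure s M) F G has_derivative (\<lambda>v. (1/2) * ?P' v)) (at w)"
    by (simp only:)
  from grad_inner_eq_derivative[OF this, of v] show ?thesis
    by (simp only: inner_commute[of v])
qed

lemma wedge_structure_jacobi:
  fixes G1 G2 G3 :: "real^'n \<Rightarrow> real"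
  assumes "M *v s = 0"
    and "\<And>y. G1 differentiable (at y)" "grad G1 differentiable (at w)"
    and "\<And>y. G2 differentiable (at y)" "grad G2 differentiable (at w)"
    and "\<And>y. G3 differentiable (at y)" "grad G3 differentiable (at w)"
  shows "bracket (wedge_structure s M) G1 (bracket (wedge_structure s M) G2 G3) w
       + bracket (wedge_structure s M) G2 (bracket (wedge_structure s M) G3 G1) w
       + bracket (wedge_structure s M) G3 (bracket (wedge_structure s M) G1 G2) w = 0"
proof -
  obtain H1 H2 H3 where H1: "(grad G1 has_derivative H1) (at w)"
    and H2: "(grad G2 has_derivative H2) (at w)" and H3: "(grad G3 has_derivative H3) (at w)"
    using assms(3,5,7) unfolding differentiable_def by blast
  show ?thesis
    unfolding bracket_wedge_structure[of s M _ "bracket _ _ _"]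
      inner_grad_bracket_wedge_structure[OF H1 H2] inner_grad_bracket_wedge_structure[OF H2 H3]
      inner_grad_bracket_wedge_structure[OF H3 H1]
      grad_derivative_symmetric[OF assms(2) H1, of s "M *v w"]
      grad_derivative_symmetric[OF assms(4) H2, of s "M *v w"]
      grad_derivative_symmetric[OF assms(6) H3, of s "M *v w"] \<open>M *v s = 0\<close>
    by (simp add: algebra_simps)
qed

lemma wedge_structure_mult_neg_unit:
  assumes "s \<bullet> s = 1" and "s \<bullet> (M *v w) = 0"
  shows "wedge_structure s M w *v (- s) = (1/2) *\<^sub>R (M *v w)"
  using assms by (simp add: wedge_structure_mult_vec inner_commute)

lemma inner_mult_vec_eq_0_if_skew:
  fixes M :: "real^'n^'n"
  assumes "transpose M = - M" and "M *v s = 0"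
  shows "s \<bullet> (M *v w) = 0"
proof -
  have "(- M) *v s = - (M *v s)"
    by (simp add: vec_eq_iff matrix_vector_mult_def sum_negf)
  then have "transpose M *v s = 0"
    using assms by simp
  then show ?thesis
    by (simp flip: dot_lmul_matrix)
qed

lemma transpose_Amat: "transpose (Amat Q p) = - Amat Q p"
  by (simp add: Amat_def transpose_def vec_eq_iff)

lemma Amat_mult_sqrtv:
  assumes "generator Q" and pos: "\<forall>x. p $ x > 0" and "transpose Q *v p = 0"
  shows "Amat Q p *v sqrtv p = 0"
proof -
  have "(Amat Q p *v sqrtv p) $ x = 0" for x
  proof -
    have "(Q $ y $ x * sqrt (p $ y / p $ x) - Q $ x $ y * sqrt (p $ x / p $ y)) * sqrt (p $ y)
        = Q $ y $ x * p $ y / sqrt (p $ x) - Q $ x $ y * sqrt (p $ x)" for y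
      using pos[rule_format, of x] pos[rule_format, of y] by (simp add: real_sqrt_divide field_simps)
    then have "(Amat Q p *v sqrtv p) $ x
        = (\<Sum>y\<in>UNIV. Q $ y $ x * p $ y / sqrt (p $ x) - Q $ x $ y * sqrt (p $ x))"
      by (simp add: matrix_vector_mult_def Amat_def sqrtv_def)
    also have "\<dots> = (transpose Q *v p) $ x / sqrt (p $ x) - (\<Sum>y\<in>UNIV. Q $ x $ y) * sqrt (p $ x)"
      by (simp add: sum_subtractf sum_divide_distrib sum_distrib_right matrix_vector_mult_def
          transpose_def)
    also have "\<dots> = 0"
      using assms by (simp add: generator_def)
    finally show ?thesis .
  qed
  then show ?thesis
    by (simp add: vec_eq_iff)
qed

lemma inner_sqrtv_self:
  assumes "\<forall>x. p $ x \<ge> 0"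
  shows "sqrtv p \<bullet> sqrtv p = (\<Sum>x\<in>UNIV. p $ x)"
  using assms by (simp add: inner_vec_def sqrtv_def)

lemma grad_Etil: "grad (Etil p) w = - sqrtv p"
proof -
  have "(Etil p has_derivative (\<lambda>h. - sqrtv p \<bullet> h)) (at w)"
    unfolding Etil_def by (auto intro!: derivative_eq_intros)
  then show ?thesis
    by (simp add: grad_def vec_eq_iff inner_axis frechet_derivative_at[symmetric])
qed

lemma Jtil_eq_wedge_structure: "Jtil Q p = wedge_structure (sqrtv p) (Amat Q p)"
  by (simp add: fun_eq_iff Jtil_def wedge_structure_def)

theorem proposition4p1:
  fixes Q :: "real^'x::finite^'x" and p :: "real^'x"
  assumes "generator Q" and "irreducible_gen Q"
    and "\<forall>x. p$x > 0" and "transpose Q *v p = 0" and "(\<Sum>x\<in>UNIV. p$x) = 1"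
  shows "(\<forall>w. transpose (Jtil Q p w) = - Jtil Q p w)
    \<and> (\<forall>G1 G2 G3 :: real^'x \<Rightarrow> real.
          (\<forall>w. G1 differentiable (at w)) \<and> (\<forall>w. grad G1 differentiable (at w)) \<and>
          (\<forall>w. G2 differentiable (at w)) \<and> (\<forall>w. grad G2 differentiable (at w)) \<and>
          (\<forall>w. G3 differentiable (at w)) \<and> (\<forall>w. grad G3 differentiable (at w)) \<longrightarrow>
          (\<forall>w. bracket (Jtil Q p) G1 (bracket (Jtil Q p) G2 G3) w
             + bracket (Jtil Q p) G2 (bracket (Jtil Q p) G3 G1) w
             + bracket (Jtil Q p) G3 (bracket (Jtil Q p) G1 G2) w = 0))
    \<and> (\<forall>w. (1/2) *\<^sub>R (Amat Q p *v w) = Jtil Q p w *v grad (Etil p) w)"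
proof -
  have "Amat Q p *v sqrtv p = 0"
    using Amat_mult_sqrtv assms(1,3,4) .
  moreover have "sqrtv p \<bullet> sqrtv p = 1"
    using assms(3,5) by (simp add: inner_sqrtv_self less_imp_le)
  moreover have "sqrtv p \<bullet> (Amat Q p *v w) = 0" for w
    using inner_mult_vec_eq_0_if_skew[OF transpose_Amat \<open>Amat Q p *v sqrtv p = 0\<close>] .
  ultimately show ?thesis
    unfolding Jtil_eq_wedge_structure grad_Etil
    by (simp add: transpose_wedge_structure wedge_structure_jacobi wedge_structure_mult_neg_unit)
qed

end
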